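(* Let $n$ be an odd positive integer. Then there exists a $(4n+2)\times(4n+2)$ matrix $B$, all of whose entries lie in $\{0,1\}$, which has two distinct eigenvalues $\lambda\neq\mu$ with $|\lambda-\mu|\le 2^{-\frac{(n+3)(n-3)}{4}}$. Moreover, $\lambda$ and $\mu$ are both roots of a single factor of the characteristic polynomial $\chi(B)$ which is irreducible over $\mathbb{Z}$ and has degree $2n+2$.
   Context: $\chi(B)=\det(tI-B)$ denotes the characteristic polynomial of $B$, a monic polynomial with integer coefficients. *)

theory Defs
  imports Complex_Main "Jordan_Normal_Form.Char_Poly"
begin

end

theory Submission
  imports
    Defs
    "HOL-Computational_Algebra.Field_as_Ring"
    "Subresultants.Subresultant_Gcd"
begin

text \<open>Write n = 2m + 1. The matrix is the adjacency matrix of a directed graph on 8m + 6 vertices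
  whose walks that leave vertex 0 and first return to it have the generating function
  2 w^(4m+2) (2^m + w)^2 in w = 1/z; doubling ladders of depth m supply the 2^m parallel paths.
  Hence every root z of f = x^(4m+4) - 2 (2^m x + 1)^2 is an eigenvalue, with an explicit
  eigenvector. The polynomial f is irreducible by Eisenstein's criterion at 2, so it divides the
  characteristic polynomial. For m \<ge> 1, f(-1/2^m) > 0 while f < 0 at -(1 \<plusminus> t)/2^m for
  t = 2^(-2(m-1)(m+1)), which traps two real roots of f in an interval of length 2^(-(m-1)(2m+3)).\<close>

lemma eisenstein_factor_degree:
  fixes g h :: "'a :: idom poly"
  assumes p: "prime_elem p" and h0: "\<not> p dvd coeff h 0" and lc: "\<not> p dvd lead_coeff g"
    and low: "\<And>i. i < degree (g * h) \<Longrightarrow> p dvd coeff (g * h) i"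
  shows "degree (g * h) \<le> degree g"
proof -
  define i where "i = (LEAST i. \<not> p dvd coeff g i)"
  have gi: "\<not> p dvd coeff g i" unfolding i_def by (rule LeastI[of _ "degree g"]) (rule lc)
  have "i \<le> degree g" unfolding i_def by (rule Least_le) (rule lc)
  have below: "p dvd coeff g j" if "j < i" for j using not_less_Least[OF that[unfolded i_def]] by blast
  have "coeff (g * h) i = (\<Sum>j<i. coeff g j * coeff h (i - j)) + coeff g i * coeff h 0"
    by (simp add: coeff_mult lessThan_Suc_atMost[symmetric])
  moreover have "p dvd (\<Sum>j<i. coeff g j * coeff h (i - j))"
    by (intro dvd_sum dvd_mult2 below) simp
  moreover have "\<not> p dvd coeff g i * coeff h 0"
    using gi h0 p by (simp add: prime_elem_dvd_mult_iff)
  ultimately have "\<not> p dvd coeff (g * h) i" by (simp add: dvd_add_right_iff)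
  with low have "degree (g * h) \<le> i" by (meson not_le)
  with \<open>i \<le> degree g\<close> show ?thesis by simp
qed

lemma eisenstein_irreducible:
  fixes f :: "'a :: {idom_divide, algebraic_semidom} poly"
  assumes p: "prime_elem p" and lc: "is_unit (lead_coeff f)" and deg: "degree f > 0"
    and low: "\<And>i. i < degree f \<Longrightarrow> p dvd coeff f i" and c0: "\<not> p^2 dvd coeff f 0"
  shows "irreducible f"
proof (rule irreducibleI)
  show "f \<noteq> 0" "\<not> is_unit f" using deg by (auto simp: is_unit_poly_iff)
  fix g h assume f: "f = g * h"
  have lc_units: "is_unit (lead_coeff g)" "is_unit (lead_coeff h)"
    using lc unfolding f lead_coeff_mult by (auto dest: is_unit_mult_iff[THEN iffD1])
  have not_dvd_lc: "\<not> p dvd lead_coeff g" "\<not> p dvd lead_coeff h"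
    using lc_units p by (auto dest: dvd_unit_imp_unit simp: prime_elem_def)
  have "g \<noteq> 0" "h \<noteq> 0" using lc_units by auto
  hence deg_sum: "degree f = degree g + degree h" by (simp add: f degree_mult_eq)
  have unit_if_const: "is_unit q" if "degree q = 0" "is_unit (lead_coeff q)" for q :: "'a poly"
    using that by (auto simp: is_unit_poly_iff elim!: degree_eq_zeroE)
  have "coeff f 0 = coeff g 0 * coeff h 0" by (simp add: f coeff_mult)
  hence "\<not> (p dvd coeff g 0 \<and> p dvd coeff h 0)"
    using c0 by (auto simp: power2_eq_square intro: mult_dvd_mono)
  then consider "\<not> p dvd coeff h 0" | "\<not> p dvd coeff g 0" by blast
  then show "is_unit g \<or> is_unit h"
  proof cases
    case 1
    have "degree (g * h) \<le> degree g"
      using eisenstein_factor_degree[OF p 1 not_dvd_lc(1)] low f by simp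
    with deg_sum f have "degree h = 0" by simp
    thus ?thesis using unit_if_const lc_units by blast
  next
    case 2
    have "degree (h * g) \<le> degree h"
      using eisenstein_factor_degree[OF p 2 not_dvd_lc(2)] low f by (simp add: mult.commute)
    with deg_sum f have "degree g = 0" by (simp add: mult.commute)
    thus ?thesis using unit_if_const lc_units by blast
  qed
qed

lemma irreducible_int_poly_dvd_of_common_root:
  fixes f g :: "int poly" and z :: complex
  assumes irr: "irreducible f"
    and f_root: "poly (of_int_poly f) z = 0" and g_root: "poly (of_int_poly g) z = 0"
  shows "f dvd g"
proof -
  let ?F = "of_int_poly f :: complex poly" and ?G = "of_int_poly g :: complex poly"
  have "[:-z, 1:] dvd gcd ?F ?G"
    using f_root g_root by (simp add: poly_eq_0_iff_dvd)
  moreover have "gcd ?F ?G \<noteq> 0"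
    using irr by auto
  ultimately have "degree [:-z, 1:] \<le> degree (gcd ?F ?G)"
    by (rule dvd_imp_degree_le)
  hence "resultant ?F ?G = 0"
    by (simp add: resultant_0_gcd)
  hence "resultant f g = 0"
    by (simp add: of_int_hom.resultant_hom)
  hence "\<not> is_unit (gcd f g)"
    by (auto simp: resultant_0_gcd is_unit_poly_iff)
  moreover have f: "f = gcd f g * (f div gcd f g)"
    by simp
  ultimately have "is_unit (f div gcd f g)"
    using irreducibleD[OF irr] by blast
  hence "f dvd gcd f g"
    by (metis f mult_unit_dvd_iff dvd_refl)
  thus ?thesis
    using dvd_trans gcd_dvd2 by blast
qed

lemma irreducible_dvd_char_poly:
  fixes B :: "int mat" and f :: "int poly" and z :: "complex"
  assumes B: "B \<in> carrier_mat n n" and irr: "irreducible f"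
    and root: "poly (of_int_poly f) z = 0" and eig: "eigenvalue (map_mat of_int B) z"
  shows "f dvd char_poly B"
proof (rule irreducible_int_poly_dvd_of_common_root[OF irr root])
  have "poly (char_poly (map_mat of_int B)) z = 0"
    using eig B by (simp add: eigenvalue_root_char_poly)
  moreover have "char_poly (map_mat of_int B) = (of_int_poly (char_poly B) :: complex poly)"
    by (rule of_int_hom.char_poly_hom[OF B])
  ultimately show "poly (of_int_poly (char_poly B)) z = 0" by simp
qed

definition adjacency_mat :: "nat \<Rightarrow> (nat \<Rightarrow> nat set) \<Rightarrow> int mat" where
  "adjacency_mat N S = mat N N (\<lambda>(i, j). if j \<in> S i then 1 else 0)"

lemma adjacency_mat_carrier: "adjacency_mat N S \<in> carrier_mat N N"
  by (simp add: adjacency_mat_def)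

lemma adjacency_mat_01: "i < N \<Longrightarrow> j < N \<Longrightarrow> adjacency_mat N S $$ (i, j) \<in> {0, 1}"
  by (simp add: adjacency_mat_def)

lemma eigenvalue_adjacency_matI:
  fixes v :: "nat \<Rightarrow> 'a :: comm_ring_1"
  assumes succs: "\<And>i. i < N \<Longrightarrow> S i \<subseteq> {..<N}"
    and eq: "\<And>i. i < N \<Longrightarrow> (\<Sum>j\<in>S i. v j) = z * v i"
    and k: "k < N" "v k \<noteq> 0"
  shows "eigenvalue (map_mat of_int (adjacency_mat N S)) z"
  unfolding eigenvalue_def eigenvector_def
proof (intro exI conjI)
  let ?A = "map_mat of_int (adjacency_mat N S) :: 'a mat"
  show "vec N v \<in> carrier_vec (dim_row ?A)" by (simp add: adjacency_mat_def)
  show "vec N v \<noteq> 0\<^sub>v (dim_row ?A)"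
    using k by (auto simp: adjacency_mat_def dest!: arg_cong[of _ _ "\<lambda>x. x $ k"])
  show "?A *\<^sub>v vec N v = z \<cdot>\<^sub>v vec N v"
  proof (rule eq_vecI)
    fix i assume "i < dim_vec (z \<cdot>\<^sub>v vec N v)"
    hence i: "i < N" by simp
    have "(?A *\<^sub>v vec N v) $ i = (\<Sum>j<N. if j \<in> S i then v j else 0)"
      using i by (auto simp: adjacency_mat_def scalar_prod_def atLeast0LessThan intro!: sum.cong)
    also have "\<dots> = (\<Sum>j\<in>S i. v j)"
      using succs[OF i] by (simp add: sum.If_cases Int_absorb1)
    finally show "(?A *\<^sub>v vec N v) $ i = (z \<cdot>\<^sub>v vec N v) $ i" using i eq by simp
  qed (simp add: adjacency_mat_def)
qed

definition gap_poly :: "nat \<Rightarrow> int poly" where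
  "gap_poly m = monom 1 (4*m+4) - Polynomial.smult 2 ([:1, 2^m:]^2)"

lemma poly_gap_poly:
  fixes x :: "'a :: comm_ring_1"
  shows "poly (of_int_poly (gap_poly m)) x = x^(4*m+4) - 2 * (1 + 2^m * x)^2"
proof -
  interpret of_int_poly_hom: map_poly_comm_ring_hom "of_int :: int \<Rightarrow> 'a" ..
  show ?thesis by (simp add: gap_poly_def hom_distribs poly_monom mult.commute)
qed

lemma degree_gap_poly_square: "degree ([:1, 2^m:]^2 :: int poly) = 2"
  by (simp add: degree_power_eq)

lemma degree_gap_poly: "degree (gap_poly m) = 4*m+4"
  unfolding gap_poly_def diff_conv_add_uminus
  by (subst degree_add_eq_left) (simp_all add: degree_monom_eq degree_gap_poly_square)

lemma coeff_gap_poly: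
  "coeff (gap_poly m) i = (if i = 4*m+4 then 1 else - (2 * coeff ([:1, 2^m:]^2) i))"
proof -
  have "coeff ([:1, 2^m:]^2 :: int poly) (4*m+4) = 0"
    by (rule coeff_eq_0) (simp add: degree_gap_poly_square)
  thus ?thesis by (simp add: gap_poly_def coeff_monom)
qed

lemma irreducible_gap_poly: "irreducible (gap_poly m)"
proof (rule eisenstein_irreducible[where p = 2])
  show "prime_elem (2 :: int)" by simp
  show "is_unit (lead_coeff (gap_poly m))" by (simp add: degree_gap_poly coeff_gap_poly)
  show "degree (gap_poly m) > 0" by (simp add: degree_gap_poly)
  show "2 dvd coeff (gap_poly m) i" if "i < degree (gap_poly m)" for i
    using that by (simp add: degree_gap_poly coeff_gap_poly)
  show "\<not> 2^2 dvd coeff (gap_poly m) 0"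
    by (simp add: coeff_gap_poly power2_eq_square)
qed

lemma two_zeros_between:
  fixes f :: "real \<Rightarrow> real"
  assumes cont: "continuous_on {a..c} f" and "a < b" "b < c" and "f a < 0" "0 < f b" "f c < 0"
  shows "\<exists>x y. a < x \<and> x < y \<and> y < c \<and> f x = 0 \<and> f y = 0"
proof -
  obtain x where x: "a \<le> x" "x \<le> b" "f x = 0"
    using IVT'[of f a 0 b] assms continuous_on_subset[OF cont, of "{a..b}"] by auto
  obtain y where y: "b \<le> y" "y \<le> c" "f y = 0"
    using IVT2'[of f c 0 b] assms continuous_on_subset[OF cont, of "{b..c}"] by auto
  have "x \<noteq> a" "x \<noteq> b" "y \<noteq> b" "y \<noteq> c" using x y assms by auto
  with x y show ?thesis by (intro exI[of _ x] exI[of _ y]) auto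
qed

lemma gap_poly_real_roots_0:
  "\<exists>x y :: real. x < y \<and> poly (of_int_poly (gap_poly 0)) x = 0 \<and>
     poly (of_int_poly (gap_poly 0)) y = 0 \<and> y - x < 4"
proof -
  have F: "poly (of_int_poly (gap_poly 0)) x = x^4 - 2 * (1 + x)^2" for x :: real
    by (simp add: poly_gap_poly)
  have "\<exists>x y :: real. -1 < x \<and> x < y \<and> y < 3 \<and> - (x^4 - 2 * (1 + x)^2) = 0 \<and> - (y^4 - 2 * (1 + y)^2) = 0"
    by (intro two_zeros_between[where b = 0] continuous_intros) auto
  then obtain x y :: real where "-1 < x" "x < y" "y < 3" "x^4 - 2 * (1 + x)^2 = 0" "y^4 - 2 * (1 + y)^2 = 0"
    by auto
  thus ?thesis unfolding F by (intro exI[of _ x] exI[of _ y]) auto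
qed

lemma poly_gap_poly_scaled:
  "poly (of_int_poly (gap_poly m)) (- (s / 2^m) :: real) = (s / 2^m)^(4*m+4) - 2 * (1 - s)^2"
  by (simp add: poly_gap_poly power_minus_even)

lemma gap_poly_real_roots_close:
  assumes "m \<noteq> 0"
  shows "\<exists>x y :: real. x < y \<and> poly (of_int_poly (gap_poly m)) x = 0 \<and>
     poly (of_int_poly (gap_poly m)) y = 0 \<and> y - x < (1/2)^((m-1) * (2*m+3))"
proof -
  define F :: "real \<Rightarrow> real" where "F = poly (of_int_poly (gap_poly m))"
  define q :: real where "q = (1/2)^(m-1)"
  define t where "t = q^(2*m+2)"
  have q: "0 < q" "q \<le> 1" "2 / 2^m = q"
    using assms by (auto simp: q_def power_le_one power_one_over field_simps simp flip: power_Suc)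
  have t: "0 < t" "t \<le> 1"
    unfolding t_def using q by (simp, intro power_le_one) auto
  have bound: "F (- (s / 2^m)) \<le> t^2 - 2 * (1 - s)^2" if "0 \<le> s" "s \<le> 2" for s
  proof -
    have "(s / 2^m)^(4*m+4) \<le> q^(4*m+4)"
      using that q by (intro power_mono) (auto simp: field_simps)
    also have "\<dots> = t^2"
      unfolding t_def power_mult[symmetric] by (rule arg_cong[where f = "power q"]) simp
    finally show ?thesis by (simp add: F_def poly_gap_poly_scaled)
  qed
  have "\<exists>x y. - ((1 + t) / 2^m) < x \<and> x < y \<and> y < - ((1 - t) / 2^m) \<and> F x = 0 \<and> F y = 0"
  proof (rule two_zeros_between)
    show "continuous_on {- ((1 + t) / 2^m) .. - ((1 - t) / 2^m)} F"
      unfolding F_def by (intro continuous_intros)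
    have "0 < t^2" using t by simp
    show "F (- ((1 + t) / 2^m)) < 0" "F (- ((1 - t) / 2^m)) < 0"
      using bound[of "1 + t"] bound[of "1 - t"] t by simp_all (use \<open>0 < t^2\<close> in linarith)+
    show "0 < F (- (1 / 2^m))"
      by (simp add: F_def poly_gap_poly_scaled)
  qed (use t in \<open>auto simp: field_simps\<close>)
  then obtain x y where xy: "x < y" "F x = 0" "F y = 0"
    and "- ((1 + t) / 2^m) < x" "y < - ((1 - t) / 2^m)"
    by blast
  moreover have "- ((1 - t) / 2^m) - - ((1 + t) / 2^m) = t * (2 / (2^m :: real))"
    by (simp add: field_simps)
  ultimately have "y - x < t * (2 / 2^m)" by linarith
  also have "t * (2 / 2^m) = q^(2*m+3)"
    by (simp add: q(3) t_def power_add power2_eq_square power3_eq_cube mult_ac)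
  also have "\<dots> = (1/2)^((m-1) * (2*m+3))"
    unfolding q_def by (rule power_mult[symmetric])
  finally show ?thesis
    using xy unfolding F_def by blast
qed

lemma gap_poly_close_real_roots:
  "\<exists>x y :: real. x < y \<and> poly (of_int_poly (gap_poly m)) x = 0 \<and>
     poly (of_int_poly (gap_poly m)) y = 0 \<and> y - x \<le> 2 powr (- ((real m + 2) * (real m - 1)))"
proof (cases "m = 0")
  case True
  thus ?thesis using gap_poly_real_roots_0 by fastforce
next
  case False
  have half_power: "(1/2::real)^k = 2 powr (- real k)" for k :: nat
    by (simp add: powr_minus powr_realpow power_one_over inverse_eq_divide)
  have "(1/2::real)^((m-1) * (2*m+3)) \<le> (1/2)^((m-1) * (m+2))"
    by (rule power_decreasing[OF mult_le_mono2]) auto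
  also have "\<dots> = 2 powr (- real ((m-1) * (m+2)))"
    by (rule half_power)
  also have "real ((m-1) * (m+2)) = (real m + 2) * (real m - 1)"
    using False by (cases m) (simp_all add: algebra_simps)
  finally have "(1/2::real)^((m-1) * (2*m+3)) \<le> 2 powr (- ((real m + 2) * (real m - 1)))" .
  moreover obtain x y :: real where "x < y" "poly (of_int_poly (gap_poly m)) x = 0"
    "poly (of_int_poly (gap_poly m)) y = 0" "y - x < (1/2)^((m-1) * (2*m+3))"
    using gap_poly_real_roots_close[OF False] by blast
  ultimately show ?thesis by (intro exI[of _ x] exI[of _ y]) auto
qed

text \<open>The vertices are laid out as follows: a path 0 \<rightarrow> 1 \<rightarrow> \<dots> \<rightarrow> 2m; from the fork 2m, two
  ladders on 2m+1..3m and 3m+1..4m (each vertex of a level points to both vertices of the next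
  level) and a path 4m+1 \<rightarrow> \<dots> \<rightarrow> 5m+1, all entering the two hubs 5m+2, 5m+3; from the hubs, two
  ladders on 5m+4..6m+3 and 6m+4..7m+3 and a path 7m+4 \<rightarrow> \<dots> \<rightarrow> 8m+4, all returning to 0. Vertex
  8m+5 is isolated. For m = 0 the ladders are empty and their two ends are joined directly.\<close>

definition gap_graph :: "nat \<Rightarrow> nat \<Rightarrow> nat set" where
  "gap_graph m x =
    (if x < 2*m then {x+1}
     else if x = 2*m then (if m = 0 then {4*m+1, 5*m+2, 5*m+3} else {2*m+1, 3*m+1, 4*m+1})
     else if x < 3*m then {x+1, x+m+1}
     else if x = 3*m then {5*m+2, 5*m+3}
     else if x < 4*m then {x+1, x+1-m}
     else if x = 4*m then {5*m+2, 5*m+3}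
     else if x \<le> 5*m then {x+1}
     else if x = 5*m+1 then {5*m+2, 5*m+3}
     else if x \<le> 5*m+3 then (if m = 0 then {0, 7*m+4} else {5*m+4, 6*m+4, 7*m+4})
     else if x < 6*m+3 then {x+1, x+m+1}
     else if x = 6*m+3 then {0}
     else if x < 7*m+3 then {x+1, x+1-m}
     else if x = 7*m+3 then {0}
     else if x < 8*m+4 then {x+1}
     else if x = 8*m+4 then {0}
     else {})"

text \<open>The entry of gap_eigvec at x \<noteq> 0 is the sum of w^(length) over the walks from x that first
  reach vertex 0 at their end, and gap_hub is its value at the hubs. At x = 0 the same sum is taken
  over closed walks, so it is 1 exactly when 1/w is a root of gap_poly; then gap_eigvec is an
  eigenvector for the eigenvalue 1/w.\<close>

definition gap_hub :: "nat \<Rightarrow> 'a :: field \<Rightarrow> 'a" where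
  "gap_hub m w = w * ((2*w)^m + w^(m+1))"

definition gap_eigvec :: "nat \<Rightarrow> 'a :: field \<Rightarrow> nat \<Rightarrow> 'a" where
  "gap_eigvec m w x =
    (if x \<le> 2*m then 2 * w^(2*m-x) * gap_hub m w ^ 2
     else if x \<le> 3*m then (2*w)^(3*m+1-x) * gap_hub m w
     else if x \<le> 4*m then (2*w)^(4*m+1-x) * gap_hub m w
     else if x \<le> 5*m+1 then 2 * w^(5*m+2-x) * gap_hub m w
     else if x \<le> 5*m+3 then gap_hub m w
     else if x \<le> 6*m+3 then (2*w)^(6*m+3-x) * w
     else if x \<le> 7*m+3 then (2*w)^(7*m+3-x) * w
     else if x \<le> 8*m+4 then w^(8*m+5-x)
     else 0)"

lemma gap_graph_bounded: "x < 8*m+6 \<Longrightarrow> gap_graph m x \<subseteq> {..<8*m+6}"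
  by (auto simp: gap_graph_def)

lemma power_diff_Suc_right: "k < n \<Longrightarrow> a ^ (n - k) = a * a ^ (n - Suc k)"
  by (metis Suc_diff_Suc power_Suc)

lemma gap_eigvec_row_ladders:
  fixes w :: "'a :: field"
  assumes "2*m < x" "x \<le> 5*m+1"
  shows "gap_eigvec m w x = w * (\<Sum>y\<in>gap_graph m x. gap_eigvec m w y)"
proof -
  consider "x < 3*m" | "3*m < x" "x < 4*m" | "4*m < x" "x \<le> 5*m" | "x \<in> {3*m, 4*m, 5*m+1}"
    using assms by fastforce
  then show ?thesis
  proof cases
    case 2
    moreover have "2*m < x+1-m" "x+1-m \<le> 3*m" "3*m+1 - (x+1-m) = 4*m+1 - (x+1)"
      using 2 by linarith+
    ultimately show ?thesis
      by (simp add: gap_graph_def gap_eigvec_def power_diff_Suc_right)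
  next
    case 4
    with assms show ?thesis by (auto simp add: gap_graph_def gap_eigvec_def)
  qed (use assms in \<open>simp_all add: gap_graph_def gap_eigvec_def power_diff_Suc_right\<close>)
qed

lemma gap_eigvec_row_returns:
  fixes w :: "'a :: field"
  assumes "5*m+3 < x" "x \<le> 8*m+4" and root: "gap_eigvec m w 0 = 1"
  shows "gap_eigvec m w x = w * (\<Sum>y\<in>gap_graph m x. gap_eigvec m w y)"
proof -
  consider "x < 6*m+3" | "6*m+3 < x" "x < 7*m+3" | "7*m+3 < x" "x < 8*m+4"
    | "x \<in> {6*m+3, 7*m+3, 8*m+4}"
    using assms by fastforce
  then show ?thesis
  proof cases
    case 2
    moreover have "5*m+3 < x+1-m" "x+1-m \<le> 6*m+3" "6*m+3 - (x+1-m) = 7*m+3 - (x+1)"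
      using 2 by linarith+
    ultimately show ?thesis
      by (simp add: gap_graph_def gap_eigvec_def power_diff_Suc_right)
  next
    case 4
    with assms show ?thesis by (auto simp add: gap_graph_def gap_eigvec_def)
  qed (use assms in \<open>simp_all add: gap_graph_def gap_eigvec_def power_diff_Suc_right\<close>)
qed

lemma gap_eigvec_row_fork:
  fixes w :: "'a :: field"
  shows "gap_eigvec m w (2*m) = w * (\<Sum>y\<in>gap_graph m (2*m). gap_eigvec m w y)"
proof -
  let ?H = "gap_hub m w"
  have "(\<Sum>y\<in>gap_graph m (2*m). gap_eigvec m w y) = 2 * (2*w)^m * ?H + 2 * w^(m+1) * ?H"
  proof (cases "m = 0")
    case False
    moreover have "3*m+1 - (2*m+1) = m" "4*m+1 - (3*m+1) = m" "5*m+2 - (4*m+1) = m+1"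
      by linarith+
    ultimately show ?thesis by (simp add: gap_graph_def gap_eigvec_def)
  qed (simp add: gap_graph_def gap_eigvec_def)
  hence "w * (\<Sum>y\<in>gap_graph m (2*m). gap_eigvec m w y) = 2 * ?H * (w * ((2*w)^m + w^(m+1)))"
    by (simp add: algebra_simps)
  also have "w * ((2*w)^m + w^(m+1)) = ?H"
    by (simp add: gap_hub_def)
  finally show ?thesis
    by (simp add: gap_eigvec_def power2_eq_square)
qed

lemma gap_eigvec_row_hubs:
  fixes w :: "'a :: field"
  assumes x: "5*m+1 < x" "x \<le> 5*m+3" and root: "gap_eigvec m w 0 = 1"
  shows "gap_eigvec m w x = w * (\<Sum>y\<in>gap_graph m x. gap_eigvec m w y)"
proof -
  have "(\<Sum>y\<in>gap_graph m x. gap_eigvec m w y) = (2*w)^m + w^(m+1)"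
  proof (cases "m = 0")
    case True
    hence "gap_graph m x = {0, 4}" using x by (simp add: gap_graph_def)
    thus ?thesis using True root by (simp add: gap_eigvec_def)
  next
    case False
    hence "gap_graph m x = {5*m+4, 6*m+4, 7*m+4}" using x by (simp add: gap_graph_def)
    moreover have "6*m+3 - (5*m+4) = m-1" "7*m+3 - (6*m+4) = m-1" "8*m+5 - (7*m+4) = m+1"
      by linarith+
    with False have "gap_eigvec m w (5*m+4) = (2*w)^(m-1) * w"
      "gap_eigvec m w (6*m+4) = (2*w)^(m-1) * w" "gap_eigvec m w (7*m+4) = w^(m+1)"
      by (simp_all add: gap_eigvec_def)
    moreover have "2 * ((2*w)^(m-1) * w) = (2*w)^m"
      using False by (simp add: power_eq_if)
    ultimately show ?thesis using False by (simp add: mult_ac)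
  qed
  moreover have "gap_eigvec m w x = gap_hub m w"
    using x by (simp add: gap_eigvec_def)
  ultimately show ?thesis by (simp add: gap_hub_def)
qed

lemma gap_eigvec_row:
  fixes w :: "'a :: field"
  assumes x: "x < 8*m+6" and root: "gap_eigvec m w 0 = 1"
  shows "gap_eigvec m w x = w * (\<Sum>y\<in>gap_graph m x. gap_eigvec m w y)"
proof -
  consider "x < 2*m" | "x = 2*m" | "2*m < x" "x \<le> 5*m+1" | "5*m+1 < x" "x \<le> 5*m+3"
    | "5*m+3 < x" "x \<le> 8*m+4" | "x = 8*m+5"
    using x by fastforce
  then show ?thesis
  proof cases
    case 1
    thus ?thesis by (simp add: gap_graph_def gap_eigvec_def power_diff_Suc_right)
  next
    case 2
    thus ?thesis by (simp only: gap_eigvec_row_fork)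
  next
    case 3
    thus ?thesis by (rule gap_eigvec_row_ladders)
  next
    case 4
    with root show ?thesis by (intro gap_eigvec_row_hubs)
  next
    case 5
    thus ?thesis using root by (rule gap_eigvec_row_returns)
  next
    case 6
    thus ?thesis by (simp add: gap_graph_def gap_eigvec_def)
  qed
qed

lemma gap_hub_eq: "gap_hub m w = w^(m+1) * (2^m + w)"
  by (simp add: gap_hub_def power_mult_distrib algebra_simps)

lemma gap_eigvec_0: "gap_eigvec m w 0 = 2 * w^(4*m+2) * (2^m + w)^2"
proof -
  have "w^(2*m) * (w^(m+1))^2 = w^(4*m+2)"
    unfolding power_mult[symmetric] power_add[symmetric] by (rule arg_cong[where f = "power w"]) simp
  thus ?thesis by (simp add: gap_eigvec_def gap_hub_eq power_mult_distrib mult_ac)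
qed

lemma gap_eigvec_0_inverse_root:
  fixes z :: "'a :: field_char_0"
  assumes root: "poly (of_int_poly (gap_poly m)) z = 0"
  shows "z \<noteq> 0" and "gap_eigvec m (inverse z) 0 = 1"
proof -
  have z_eq: "z^(4*m+4) = 2 * (1 + 2^m * z)^2"
    using root by (simp add: poly_gap_poly)
  thus z: "z \<noteq> 0" by (auto simp: power_0_left)
  let ?w = "inverse z"
  have "4*m+4 = (4*m+2) + 2" by simp
  hence w_power: "?w^(4*m+4) = ?w^(4*m+2) * ?w^2"
    by (simp only: power_add)
  have "1 = (z * ?w)^(4*m+4)" using z by simp
  also have "\<dots> = 2 * ?w^(4*m+2) * ((1 + 2^m * z) * ?w)^2"
    unfolding power_mult_distrib z_eq w_power by (simp add: mult_ac)
  also have "(1 + 2^m * z) * ?w = 2^m + ?w" using z by (simp add: field_simps)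
  finally show "gap_eigvec m ?w 0 = 1" by (simp add: gap_eigvec_0)
qed

definition gap_mat :: "nat \<Rightarrow> int mat" where
  "gap_mat m = adjacency_mat (8*m+6) (gap_graph m)"

lemma gap_mat_eigenvalue:
  fixes z :: "'a :: field_char_0"
  assumes root: "poly (of_int_poly (gap_poly m)) z = 0"
  shows "eigenvalue (map_mat of_int (gap_mat m)) z"
  unfolding gap_mat_def
proof (rule eigenvalue_adjacency_matI[where v = "gap_eigvec m (inverse z)" and k = 0])
  note z = gap_eigvec_0_inverse_root[OF root]
  fix x assume "x < 8*m+6"
  show "gap_graph m x \<subseteq> {..<8*m+6}" by (rule gap_graph_bounded) fact
  show "(\<Sum>y\<in>gap_graph m x. gap_eigvec m (inverse z) y) = z * gap_eigvec m (inverse z) x"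
    using gap_eigvec_row[OF \<open>x < 8*m+6\<close> z(2)] z(1) by simp
qed (simp_all add: gap_eigvec_0_inverse_root[OF root])

lemma poly_of_int_poly_of_real:
  "poly (of_int_poly p) (of_real x :: 'a :: {real_algebra_1, field_char_0}) = of_real (poly (of_int_poly p) x)"
  by (simp add: poly_altdef degree_map_poly coeff_map_poly)

theorem mainTheorem2:
  fixes n :: nat
  assumes "odd n"
  shows "\<exists>(B :: int mat) (lam :: complex) (mu :: complex) (f :: int poly).
           B \<in> carrier_mat (4 * n + 2) (4 * n + 2) \<and>
           (\<forall>i < 4 * n + 2. \<forall>j < 4 * n + 2. B $$ (i, j) \<in> {0, 1}) \<and>
           eigenvalue (map_mat complex_of_int B) lam \<and>
           eigenvalue (map_mat complex_of_int B) mu \<and>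
           lam \<noteq> mu \<and>
           cmod (lam - mu) \<le> 2 powr (- ((real n + 3) * (real n - 3) / 4)) \<and>
           f dvd char_poly B \<and> irreducible f \<and> degree f = 2 * n + 2 \<and>
           poly (map_poly complex_of_int f) lam = 0 \<and>
           poly (map_poly complex_of_int f) mu = 0"
proof -
  obtain m where n: "n = 2*m+1" using assms by (auto elim: oddE)
  obtain x y :: real where "x < y" and roots: "poly (of_int_poly (gap_poly m)) x = 0"
    "poly (of_int_poly (gap_poly m)) y = 0" and close: "y - x \<le> 2 powr (- ((real m + 2) * (real m - 1)))"
    using gap_poly_close_real_roots by blast
  have croots: "poly (of_int_poly (gap_poly m)) (complex_of_real x) = 0"
    "poly (of_int_poly (gap_poly m)) (complex_of_real y) = 0"
    using roots by (simp_all add: poly_of_int_poly_of_real)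
  have size: "4*n+2 = 8*m+6" using n by simp
  have carrier: "gap_mat m \<in> carrier_mat (4*n+2) (4*n+2)"
    unfolding size gap_mat_def by (rule adjacency_mat_carrier)
  have "(real n + 3) * (real n - 3) / 4 = (real m + 2) * (real m - 1)"
    by (simp add: n field_simps)
  with \<open>x < y\<close> close
  have "cmod (complex_of_real x - complex_of_real y) \<le> 2 powr (- ((real n + 3) * (real n - 3) / 4))"
    by (simp flip: of_real_diff)
  moreover have "\<forall>i < 4*n+2. \<forall>j < 4*n+2. gap_mat m $$ (i, j) \<in> {0, 1}"
    unfolding size gap_mat_def using adjacency_mat_01 by blast
  moreover have "gap_poly m dvd char_poly (gap_mat m)"
    using carrier irreducible_gap_poly croots(1) gap_mat_eigenvalue[OF croots(1)]
    by (rule irreducible_dvd_char_poly)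
  ultimately show ?thesis
    using carrier croots gap_mat_eigenvalue[OF croots(1)] gap_mat_eigenvalue[OF croots(2)] \<open>x < y\<close>
    by (intro exI[of _ "gap_mat m"] exI[of _ "complex_of_real x"] exI[of _ "complex_of_real y"]
        exI[of _ "gap_poly m"]) (simp add: irreducible_gap_poly degree_gap_poly n)
qed

end
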